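(* Let $P_0,\dots,P_n$ be a transformation sequence constructed by using the transformation rules R1–R9 (defined in the context). Let $M$ be a mode for $P_0\cup\mathit{Defs}_n$ such that (i) $P_0\cup\mathit{Defs}_n$ is safe w.r.t. $M$ and (ii) the applications of the unfolding, head generalization, and case split rules during the construction of $P_0,\dots,P_n$ are safe w.r.t. $M$. Then, for $k=0,\dots,n$, the program $P_k$ is safe w.r.t. $M$.
   Context: Syntax. Predicate symbols $\mathit{true}$, $=$, $\neq$ are basic, all others non-basic. Basic atoms: $\mathit{true}$, $t_1=t_2$, $t_1\neq t_2$ (disequation); non-basic atoms: $p(t_1,\dots,t_m)$, $p$ non-basic. A goal is a conjunction of atoms ("," associative, neutral element $\mathit{true}$). A clause $C$ is $A\leftarrow G$ with non-basic head $hd(C)$ and body $bd(C)$; a program is a set of clauses. $p$ depends on $q$ in $P$ iff $(p,q)$ is in the transitive closure of "some clause for $p$ in $P$ has $q$ in its body"; $p$ depends on clause $C$ iff $C$ is a clause for $p$ or for some $q$ on which $p$ depends. mgu's are relevant and idempotent; renamed apart clauses have fresh variables. A variable $X$ is a local variable of goal $G$ in clause $H\leftarrow G_1,G,G_2$ iff $X\in vars(G)-vars(H,G_1,G_2)$. Modes. A mode for non-basic $p$ of arity $h$ is $p(m_1,\dots,m_h)$, $m_i\in\{+,?\}$; $t_i$ is an input argument iff $m_i=+$, variables in input arguments are input variables. A mode for a program contains exactly one mode per non-basic predicate occurring in it. A clause $C$ is safe w.r.t. $M$ iff every variable of every disequation $t_1\neq t_2$ in $bd(C)$ is an input variable of $hd(C)$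 or a local variable of $t_1\neq t_2$ in $C$; a program is safe iff all its clauses are. Transformation rules. In a transformation sequence $P_0,\dots,P_n$ each $P_{k+1}$ is derived from $P_k$ by one of R1–R9; $\mathit{Defs}_k$ is the set of clauses introduced by R1 while constructing $P_0,\dots,P_k$. R1 (Definition introduction): add clauses $\mathit{newp}(X_1,\dots,X_h)\leftarrow\mathit{Body}_j$ ($j=1..m$, $m\ge1$), $\mathit{newp}$ non-basic not in $P_0,\dots,P_k$, $X_i$ distinct each occurring in some $\mathit{Body}_j$, non-basic predicates of $\mathit{Body}_j$ occurring in $P_0$, each $\mathit{Body}_j$ containing a non-basic atom. R2 (Definition elimination w.r.t. $p$): $P_{k+1}=\{C\in P_k\mid p$ depends on $C\}$. R3 (Unfolding): for a renamed apart $C: H\leftarrow G_1,A,G_2$ in $P_k$ ($A$ non-basic) and the clauses $C_1,\dots,C_m$ of $P_k$ whose heads unify with $A$ via mgu's $\vartheta_i$, replace $C$ by the clauses $(H\leftarrow G_1,bd(C_i),G_2)\vartheta_i$. Safe w.r.t. $M$ iff for all $i$, every disequation $d$ in $bd(C_i)$ and every variable $X$ of $d\vartheta_i$, $X$ is an input variable of $H\vartheta_i$ or a local variable of $d$ in $C_i$. R4 (Folding): for renamed clauses $C_i: H\leftarrow G_1,\mathit{Body}_i\vartheta,G_2$ in $P_k$ and all clauses $\mathit{newp}(X_1,\dots,X_h)\leftarrow\mathit{Body}_i$ ($i=1..m$) of $\mathit{Defs}_k$ with head predicate $\mathit{newp}$, such that for each $i$ and each variable $X$ of $\mathit{Body}_i$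 not among $X_1,\dots,X_h$, $X\vartheta$ is a variable not occurring in $(H,G_1,G_2)$ nor in $Y\vartheta$ for any variable $Y\neq X$ of $\mathit{Body}_i$: replace $C_1,\dots,C_m$ by $H\leftarrow G_1,\mathit{newp}(X_1,\dots,X_h)\vartheta,G_2$. R5 (Subsumption): delete a clause $(H\leftarrow G_1,G_2)\vartheta$ of $P_k$ when $H\leftarrow G_1$ is another clause of $P_k$. R6 (Head generalization): replace $H\{X/t\}\leftarrow\mathit{Body}$ ($X$ occurs in $H$ and not in the clause) by $H\leftarrow X=t,\mathit{Body}$; safe iff $X$ is not an input variable of $H$. R7 (Case split): replace $C: H\leftarrow\mathit{Body}$, for $X\notin vars(t)$, by $(H\leftarrow\mathit{Body})\{X/t\}$ and $H\leftarrow X\neq t,\mathit{Body}$; safe iff $X$ is an input variable of $H$, $X\notin vars(t)$, and each variable of $t$ is an input variable of $H$ or does not occur in $C$. R8 (Equation elimination): $H\leftarrow G_1,t_1=t_2,G_2$ becomes $(H\leftarrow G_1,G_2)\vartheta$ if $\vartheta$ is an mgu of $t_1,t_2$, and is deleted if they are not unifiable. R9 (Disequation replacement): (1) drop $t_1\neq t_2$ from a body when $t_1,t_2$ are not unifiable; (2) replace $H\leftarrow G_1,f(t_1,\dots,t_m)\neq f(u_1,\dots,u_m),G_2$ by the $m$ clauses $H\leftarrow G_1,t_i\neq u_i,G_2$; (3) delete a clause with $X\neq X$ in its body; (4) rewrite $t\neq X$ as $X\neq t$; (5) replace $H\leftarrow G_1,X\neq t_1,G_2,X\neq t_2,G_3$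 by $H\leftarrow G_1,X\neq t_1,G_2,G_3$ when a bijection $\rho$ from the local variables of $X\neq t_1$ onto those of $X\neq t_2$ in the clause satisfies $t_1\rho=t_2$. *)

theory Defs
  imports Main
begin

text \<open>Variables are natural numbers (an infinite supply, needed for renaming apart);
  function and predicate symbols are strings.  Non-basic predicate symbols are exactly
  the strings; the basic predicates are the constructors Eq and Neq of atom, and the
  basic atom true is the neutral element of conjunction, i.e. the empty goal.\<close>

datatype trm = V nat | F string "trm list"

datatype atom = Eq trm trm | Neq trm trm | At string "trm list"

type_synonym goal = "atom list"

datatype clause = Clause (hpred: string) (hargs: "trm list") (body: goal)

type_synonym program = "clause set"

type_synonym subst = "nat \<Rightarrow> trm"

fun tsubst :: "subst \<Rightarrow> trm \<Rightarrow> trm" where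
  "tsubst \<sigma> (V x) = \<sigma> x"
| "tsubst \<sigma> (F f ts) = F f (map (tsubst \<sigma>) ts)"

fun tvars :: "trm \<Rightarrow> nat set" where
  "tvars (V x) = {x}"
| "tvars (F f ts) = (\<Union>t\<in>set ts. tvars t)"

definition tsvars :: "trm list \<Rightarrow> nat set" where
  "tsvars ts = (\<Union>t\<in>set ts. tvars t)"

fun asubst :: "subst \<Rightarrow> atom \<Rightarrow> atom" where
  "asubst \<sigma> (Eq t u) = Eq (tsubst \<sigma> t) (tsubst \<sigma> u)"
| "asubst \<sigma> (Neq t u) = Neq (tsubst \<sigma> t) (tsubst \<sigma> u)"
| "asubst \<sigma> (At p ts) = At p (map (tsubst \<sigma>) ts)"

fun avars :: "atom \<Rightarrow> nat set" where
  "avars (Eq t u) = tvars t \<union> tvars u"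
| "avars (Neq t u) = tvars t \<union> tvars u"
| "avars (At p ts) = tsvars ts"

fun apreds :: "atom \<Rightarrow> string set" where
  "apreds (At p ts) = {p}"
| "apreds _ = {}"

fun is_nonbasic :: "atom \<Rightarrow> bool" where
  "is_nonbasic (At p ts) = True"
| "is_nonbasic _ = False"

definition gvars :: "goal \<Rightarrow> nat set" where
  "gvars G = (\<Union>a\<in>set G. avars a)"

definition gpreds :: "goal \<Rightarrow> string set" where
  "gpreds G = (\<Union>a\<in>set G. apreds a)"

definition cvars :: "clause \<Rightarrow> nat set" where
  "cvars C = tsvars (hargs C) \<union> gvars (body C)"

definition csubst :: "subst \<Rightarrow> clause \<Rightarrow> clause" where
  "csubst \<sigma> C = Clause (hpred C) (map (tsubst \<sigma>) (hargs C)) (map (asubst \<sigma>) (body C))"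

definition cpreds :: "clause \<Rightarrow> string set" where
  "cpreds C = insert (hpred C) (gpreds (body C))"

definition ppreds :: "program \<Rightarrow> string set" where
  "ppreds P = (\<Union>C\<in>P. cpreds C)"

definition variant :: "clause \<Rightarrow> clause \<Rightarrow> bool" where
  "variant C D \<longleftrightarrow> (\<exists>\<rho>::nat \<Rightarrow> nat. bij \<rho> \<and> D = csubst (\<lambda>x. V (\<rho> x)) C)"

definition local_vars_at :: "clause \<Rightarrow> nat \<Rightarrow> nat set" where
  "local_vars_at C i = avars (body C ! i) -
     (tsvars (hargs C) \<union> (\<Union>j\<in>{j. j < length (body C) \<and> j \<noteq> i}. avars (body C ! j)))"

definition unifier :: "subst \<Rightarrow> trm list \<Rightarrow> trm list \<Rightarrow> bool" where
  "unifier \<sigma> ts us \<longleftrightarrow> map (tsubst \<sigma>) ts = map (tsubst \<sigma>) us"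

definition unifiable :: "trm list \<Rightarrow> trm list \<Rightarrow> bool" where
  "unifiable ts us \<longleftrightarrow> (\<exists>\<sigma>. unifier \<sigma> ts us)"

definition sdom :: "subst \<Rightarrow> nat set" where
  "sdom \<sigma> = {x. \<sigma> x \<noteq> V x}"

definition srange_vars :: "subst \<Rightarrow> nat set" where
  "srange_vars \<sigma> = (\<Union>x\<in>sdom \<sigma>. tvars (\<sigma> x))"

definition is_mgu :: "subst \<Rightarrow> trm list \<Rightarrow> trm list \<Rightarrow> bool" where
  "is_mgu \<sigma> ts us \<longleftrightarrow>
     unifier \<sigma> ts us
   \<and> (\<forall>\<tau>. unifier \<tau> ts us \<longrightarrow> (\<exists>\<delta>. \<forall>x. \<tau> x = tsubst \<delta> (\<sigma> x)))
   \<and> (\<forall>x. tsubst \<sigma> (\<sigma> x) = \<sigma> x)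
   \<and> sdom \<sigma> \<union> srange_vars \<sigma> \<subseteq> tsvars ts \<union> tsvars us"

definition dep_edges :: "program \<Rightarrow> (string \<times> string) set" where
  "dep_edges P = {(hpred C, q) | C q. C \<in> P \<and> q \<in> gpreds (body C)}"

definition depends_on_pred :: "program \<Rightarrow> string \<Rightarrow> string \<Rightarrow> bool" where
  "depends_on_pred P p q \<longleftrightarrow> (p, q) \<in> (dep_edges P)\<^sup>+"

definition depends_on_clause :: "program \<Rightarrow> string \<Rightarrow> clause \<Rightarrow> bool" where
  "depends_on_clause P p C \<longleftrightarrow> hpred C = p \<or> depends_on_pred P p (hpred C)"

datatype mann = Inp | Any  \<comment> \<open>the annotations + and ?\<close>

type_synonym mode = "string \<Rightarrow> mann list"

definition mode_for :: "mode \<Rightarrow> program \<Rightarrow> bool" where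
  "mode_for M P \<longleftrightarrow> (\<forall>C\<in>P. length (M (hpred C)) = length (hargs C) \<and>
       (\<forall>a\<in>set (body C). \<forall>p ts. a = At p ts \<longrightarrow> length (M p) = length ts))"

definition input_vars :: "mode \<Rightarrow> string \<Rightarrow> trm list \<Rightarrow> nat set" where
  "input_vars M p ts =
     (\<Union>i\<in>{i. i < length ts \<and> i < length (M p) \<and> M p ! i = Inp}. tvars (ts ! i))"

definition safe_clause :: "mode \<Rightarrow> clause \<Rightarrow> bool" where
  "safe_clause M C \<longleftrightarrow> (\<forall>i < length (body C). \<forall>t1 t2. body C ! i = Neq t1 t2 \<longrightarrow>
     (\<forall>X \<in> tvars t1 \<union> tvars t2. X \<in> input_vars M (hpred C) (hargs C) \<or> X \<in> local_vars_at C i))"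

definition safe_prog :: "mode \<Rightarrow> program \<Rightarrow> bool" where
  "safe_prog M P \<longleftrightarrow> (\<forall>C\<in>P. safe_clause M C)"

text \<open>tstep chk M P0 Hist Df P Df' P': the program P' (with definitions Df') is obtained
  from P (with definitions Df) by one application of R1--R9, where P0 is the initial
  program and Hist the set of predicates occurring in the programs constructed so far.
  If chk holds, the applications of unfolding (R3), head generalization (R6) and
  case split (R7) are additionally required to be safe w.r.t. M.\<close>

inductive tstep :: "bool \<Rightarrow> mode \<Rightarrow> program \<Rightarrow> string set \<Rightarrow>
    program \<Rightarrow> program \<Rightarrow> program \<Rightarrow> program \<Rightarrow> bool"
  for chk :: bool and M :: mode and P0 :: program and Hist :: "string set" where
  R1_definition:
  "\<lbrakk> Bs \<noteq> []; newp \<notin> Hist; distinct xs;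
     \<forall>x\<in>set xs. \<exists>B\<in>set Bs. x \<in> gvars B;
     \<forall>B\<in>set Bs. gpreds B \<subseteq> ppreds P0;
     \<forall>B\<in>set Bs. \<exists>a\<in>set B. is_nonbasic a;
     N = {Clause newp (map V xs) B | B. B \<in> set Bs} \<rbrakk>
   \<Longrightarrow> tstep chk M P0 Hist Df P (Df \<union> N) (P \<union> N)"
| R2_definition_elimination:
  "tstep chk M P0 Hist Df P Df {C\<in>P. depends_on_clause P p C}"
| R3_unfolding:
  "\<lbrakk> C \<in> P; body C = G1 @ [At q us] @ G2;
     \<forall>D\<in>P. variant D (ren D) \<and> cvars (ren D) \<inter> cvars C = {};
     \<forall>D\<in>P. \<forall>D'\<in>P. D \<noteq> D' \<longrightarrow> cvars (ren D) \<inter> cvars (ren D') = {};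
     U = {D\<in>P. hpred D = q \<and> unifiable (hargs (ren D)) us};
     \<forall>D\<in>U. is_mgu (\<theta> D) (hargs (ren D)) us;
     chk \<longrightarrow> (\<forall>D\<in>U. \<forall>i < length (body (ren D)). \<forall>t1 t2. body (ren D) ! i = Neq t1 t2 \<longrightarrow>
        (\<forall>X \<in> tvars (tsubst (\<theta> D) t1) \<union> tvars (tsubst (\<theta> D) t2).
            X \<in> input_vars M (hpred C) (map (tsubst (\<theta> D)) (hargs C))
          \<or> X \<in> local_vars_at (ren D) i)) \<rbrakk>
   \<Longrightarrow> tstep chk M P0 Hist Df P Df
        ((P - {C}) \<union> {csubst (\<theta> D) (Clause (hpred C) (hargs C) (G1 @ body (ren D) @ G2)) | D. D \<in> U})"
| R4_folding:
  "\<lbrakk> Bs \<noteq> [];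
     {E\<in>Df. hpred E = newp} = {Clause newp (map V xs) B | B. B \<in> set Bs};
     \<forall>B\<in>set Bs. \<forall>X \<in> gvars B - set xs. \<exists>Y. \<theta> X = V Y
        \<and> Y \<notin> cvars (Clause h hs (G1 @ G2))
        \<and> (\<forall>Z\<in>gvars B. Z \<noteq> X \<longrightarrow> Y \<notin> tvars (\<theta> Z));
     \<forall>B\<in>set Bs. cf B \<in> P \<and> variant (cf B) (Clause h hs (G1 @ map (asubst \<theta>) B @ G2)) \<rbrakk>
   \<Longrightarrow> tstep chk M P0 Hist Df P Df
        ((P - cf ` set Bs) \<union> {Clause h hs (G1 @ [At newp (map \<theta> xs)] @ G2)})"
| R5_subsumption:
  "\<lbrakk> Clause h hs G1 \<in> P; C = csubst \<theta> (Clause h hs (G1 @ G2)); C \<in> P;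
     C \<noteq> Clause h hs G1 \<rbrakk>
   \<Longrightarrow> tstep chk M P0 Hist Df P Df (P - {C})"
| R6_head_generalization:
  "\<lbrakk> C = Clause p (map (tsubst (V(X := t))) hs) B; C \<in> P;
     X \<in> tsvars hs; X \<notin> cvars C;
     chk \<longrightarrow> X \<notin> input_vars M p hs \<rbrakk>
   \<Longrightarrow> tstep chk M P0 Hist Df P Df ((P - {C}) \<union> {Clause p hs (Eq (V X) t # B)})"
| R7_case_split:
  "\<lbrakk> C \<in> P; X \<notin> tvars t;
     chk \<longrightarrow> (X \<in> input_vars M (hpred C) (hargs C) \<and>
               (\<forall>Y\<in>tvars t. Y \<in> input_vars M (hpred C) (hargs C) \<or> Y \<notin> cvars C)) \<rbrakk>
   \<Longrightarrow> tstep chk M P0 Hist Df P Df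
        ((P - {C}) \<union> {csubst (V(X := t)) C, Clause (hpred C) (hargs C) (Neq (V X) t # body C)})"
| R8_equation_elimination_unif:
  "\<lbrakk> C = Clause h hs (G1 @ [Eq t1 t2] @ G2); C \<in> P; is_mgu \<theta> [t1] [t2] \<rbrakk>
   \<Longrightarrow> tstep chk M P0 Hist Df P Df ((P - {C}) \<union> {csubst \<theta> (Clause h hs (G1 @ G2))})"
| R8_equation_elimination_nonunif:
  "\<lbrakk> C = Clause h hs (G1 @ [Eq t1 t2] @ G2); C \<in> P; \<not> unifiable [t1] [t2] \<rbrakk>
   \<Longrightarrow> tstep chk M P0 Hist Df P Df (P - {C})"
| R9_1:
  "\<lbrakk> C = Clause h hs (G1 @ [Neq t1 t2] @ G2); C \<in> P; \<not> unifiable [t1] [t2] \<rbrakk>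
   \<Longrightarrow> tstep chk M P0 Hist Df P Df ((P - {C}) \<union> {Clause h hs (G1 @ G2)})"
| R9_2:
  "\<lbrakk> C = Clause h hs (G1 @ [Neq (F f ts) (F f us)] @ G2); C \<in> P; length ts = length us \<rbrakk>
   \<Longrightarrow> tstep chk M P0 Hist Df P Df
        ((P - {C}) \<union> {Clause h hs (G1 @ [Neq (ts ! i) (us ! i)] @ G2) | i. i < length ts})"
| R9_3:
  "\<lbrakk> C \<in> P; Neq (V X) (V X) \<in> set (body C) \<rbrakk>
   \<Longrightarrow> tstep chk M P0 Hist Df P Df (P - {C})"
| R9_4:
  "\<lbrakk> C = Clause h hs (G1 @ [Neq t (V X)] @ G2); C \<in> P \<rbrakk>
   \<Longrightarrow> tstep chk M P0 Hist Df P Df ((P - {C}) \<union> {Clause h hs (G1 @ [Neq (V X) t] @ G2)})"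
| R9_5:
  "\<lbrakk> C = Clause h hs (G1 @ [Neq (V X) t1] @ G2 @ [Neq (V X) t2] @ G3); C \<in> P;
     L1 = local_vars_at C (length G1); L2 = local_vars_at C (length G1 + 1 + length G2);
     bij_betw \<rho> L1 L2;
     tsubst (\<lambda>y. if y \<in> L1 then V (\<rho> y) else V y) t1 = t2 \<rbrakk>
   \<Longrightarrow> tstep chk M P0 Hist Df P Df
        ((P - {C}) \<union> {Clause h hs (G1 @ [Neq (V X) t1] @ G2 @ G3)})"

definition tseq :: "bool \<Rightarrow> mode \<Rightarrow> (nat \<Rightarrow> program) \<Rightarrow> (nat \<Rightarrow> program) \<Rightarrow> nat \<Rightarrow> bool" where
  "tseq chk M P Df n \<longleftrightarrow> Df 0 = {} \<and>
     (\<forall>k<n. tstep chk M (P 0) (\<Union>j\<le>k. ppreds (P j)) (Df k) (P k) (Df (Suc k)) (P (Suc k)))"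

end

theory Submission
  imports Defs
begin

(* Safety is a condition on each disequation separately: each of its variables is an input
  variable of the head or occurs nowhere else in the clause, and every rule preserves it clause
  by clause.  A relevant mgu fixes every variable outside the unified terms and introduces it
  nowhere else, so variables local to a disequation stay local under unfolding (R3) and
  equation elimination (R8); the same holds for {X/t} in a case split (R7), as X is an input
  variable.  The safety conditions imposed on R3, R6 and R7 handle the disequation variables
  that do get instantiated or generalized.  A folded atom newp(X1,...,Xh)theta only has
  variables of the Xi theta, and by R1 each Xi occurs in some body of newp, so a variable local
  in every folded clause is absent from it (R4).  Definitions are safe since Defs_k is
  contained in Defs_n. *)

lemma tvars_tsubst: "tvars (tsubst \<sigma> t) = (\<Union>x\<in>tvars t. tvars (\<sigma> x))"
  by (induction t) auto

lemma tsvars_map_tsubst: "tsvars (map (tsubst \<sigma>) ts) = (\<Union>x\<in>tsvars ts. tvars (\<sigma> x))"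
  by (auto simp: tsvars_def tvars_tsubst)

lemma tsvars_map_V [simp]: "tsvars (map V xs) = set xs"
  by (auto simp: tsvars_def)

lemma avars_asubst: "avars (asubst \<sigma> a) = (\<Union>x\<in>avars a. tvars (\<sigma> x))"
  by (cases a) (auto simp: tvars_tsubst tsvars_map_tsubst)

lemma gvars_map_asubst: "gvars (map (asubst \<sigma>) G) = (\<Union>x\<in>gvars G. tvars (\<sigma> x))"
  by (auto simp: gvars_def avars_asubst)

lemma gvars_Nil [simp]: "gvars [] = {}"
  and gvars_Cons [simp]: "gvars (a # G) = avars a \<union> gvars G"
  and gvars_append [simp]: "gvars (G @ G') = gvars G \<union> gvars G'"
  by (auto simp: gvars_def)

lemma input_vars_map_tsubst:
  "input_vars M p (map (tsubst \<sigma>) ts) = (\<Union>x\<in>input_vars M p ts. tvars (\<sigma> x))"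
  by (auto simp: input_vars_def tvars_tsubst)

lemma input_vars_subset_tsvars: "input_vars M p ts \<subseteq> tsvars ts"
  unfolding input_vars_def tsvars_def using nth_mem by blast

lemma UN_avars_nth: "(\<Union>j<length G. avars (G ! j)) = gvars G"
  unfolding gvars_def by (auto simp: in_set_conv_nth) (use nth_mem in blast)

lemma local_vars_at_append_Cons:
  assumes "body C = L @ a # R"
  shows "local_vars_at C (length L) = avars a - (tsvars (hargs C) \<union> gvars L \<union> gvars R)"
proof -
  have "{j. j < length (body C) \<and> j \<noteq> length L}
      = {..<length L} \<union> (\<lambda>j. Suc (length L + j)) ` {..<length R}"
  proof (intro set_eqI iffI)
    fix j assume "j \<in> {j. j < length (body C) \<and> j \<noteq> length L}"
    then have "j < length L
        \<or> j = Suc (length L + (j - Suc (length L))) \<and> j - Suc (length L) < length R"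
      using assms by auto
    then show "j \<in> {..<length L} \<union> (\<lambda>j. Suc (length L + j)) ` {..<length R}"
      by blast
  qed (use assms in auto)
  then have "(\<Union>j\<in>{j. j < length (body C) \<and> j \<noteq> length L}. avars (body C ! j))
      = gvars L \<union> gvars R"
    using assms by (simp add: nth_append UN_avars_nth)
  then show ?thesis
    using assms by (auto simp: local_vars_at_def)
qed

lemma safe_clause_Clause_iff:
  "safe_clause M (Clause h hs B) \<longleftrightarrow>
     (\<forall>L t1 t2 R. B = L @ Neq t1 t2 # R \<longrightarrow> (\<forall>X \<in> tvars t1 \<union> tvars t2.
        X \<in> input_vars M h hs \<or> X \<notin> tsvars hs \<union> gvars L \<union> gvars R))"
  (is "_ \<longleftrightarrow> ?split_safe")
proof
  assume safe: "safe_clause M (Clause h hs B)"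
  show ?split_safe
  proof (intro allI impI ballI)
    fix L t1 t2 R X assume B: "B = L @ Neq t1 t2 # R" and X: "X \<in> tvars t1 \<union> tvars t2"
    have "length L < length B" "B ! length L = Neq t1 t2"
      using B by auto
    then have "X \<in> input_vars M h hs \<or> X \<in> local_vars_at (Clause h hs B) (length L)"
      using safe X unfolding safe_clause_def by auto
    then show "X \<in> input_vars M h hs \<or> X \<notin> tsvars hs \<union> gvars L \<union> gvars R"
      using local_vars_at_append_Cons[of "Clause h hs B"] B by auto
  qed
next
  assume split_safe: ?split_safe
  show "safe_clause M (Clause h hs B)"
    unfolding safe_clause_def clause.sel
  proof (intro allI impI ballI)
    fix i t1 t2 X assume i: "i < length B" "B ! i = Neq t1 t2" and X: "X \<in> tvars t1 \<union> tvars t2"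
    have B: "B = take i B @ Neq t1 t2 # drop (Suc i) B" and len: "length (take i B) = i"
      using id_take_nth_drop[OF i(1)] i by auto
    have "local_vars_at (Clause h hs B) i
        = avars (Neq t1 t2) - (tsvars hs \<union> gvars (take i B) \<union> gvars (drop (Suc i) B))"
      using local_vars_at_append_Cons[of "Clause h hs B"] B len by (metis clause.sel(2,3))
    then show "X \<in> input_vars M h hs \<or> X \<in> local_vars_at (Clause h hs B) i"
      using split_safe[rule_format, OF B X] X by auto
  qed
qed

lemma safe_clauseI:
  assumes "\<And>L t1 t2 R X. B = L @ Neq t1 t2 # R \<Longrightarrow> X \<in> tvars t1 \<union> tvars t2 \<Longrightarrow>
     X \<in> input_vars M h hs \<or> X \<notin> tsvars hs \<union> gvars L \<union> gvars R"
  shows "safe_clause M (Clause h hs B)"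
  using assms by (auto simp: safe_clause_Clause_iff)

lemma safe_clauseD:
  assumes "safe_clause M (Clause h hs B)" "B = L @ Neq t1 t2 # R" "X \<in> tvars t1 \<union> tvars t2"
  shows "X \<in> input_vars M h hs \<or> X \<notin> tsvars hs \<union> gvars L \<union> gvars R"
  using assms by (auto simp: safe_clause_Clause_iff)

lemma append_eq_append_Cons_cases:
  assumes "G @ G' = L @ b # R"
  obtains (left) R1 where "G = L @ b # R1" "R = R1 @ G'"
    | (right) L2 where "G' = L2 @ b # R" "L = G @ L2"
proof -
  obtain us where "G = L @ us \<and> us @ G' = b # R \<or> G @ us = L \<and> G' = us @ b # R"
    using assms by (auto simp: append_eq_append_conv2)
  then show thesis
    using that by (cases us) auto
qed

lemma append3_eq_append_Cons_cases:
  assumes "G1 @ G @ G2 = L @ b # R"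
  obtains (left) R1 where "G1 = L @ b # R1" "R = R1 @ G @ G2"
    | (middle) L1 R1 where "G = L1 @ b # R1" "L = G1 @ L1" "R = R1 @ G2"
    | (right) L2 where "G2 = L2 @ b # R" "L = G1 @ G @ L2"
  using assms
proof (cases rule: append_eq_append_Cons_cases)
  case (right L2)
  then show thesis
    using that(2,3) by (cases rule: append_eq_append_Cons_cases) auto
qed (use that(1) in auto)

lemma append_Cons_split_insert:
  assumes "G @ G' = L @ b # R"
  obtains L' R' where "G @ a # G' = L' @ b # R'" "gvars L' \<union> gvars R' = gvars L \<union> gvars R \<union> avars a"
  using assms
proof (cases rule: append_eq_append_Cons_cases)
  case (left R1)
  then show thesis
    using that[of L "R1 @ a # G'"] by auto
next
  case (right L2)
  then show thesis
    using that[of "G @ a # L2" R] by auto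
qed

lemma append_Cons_split_replace:
  assumes "G1 @ a # G2 = L @ b # R" "a \<noteq> b"
  obtains K where "gvars L \<union> gvars R = K \<union> avars a"
    and "\<And>A. \<exists>L' R'. G1 @ A @ G2 = L' @ b # R' \<and> gvars L' \<union> gvars R' = K \<union> gvars A"
proof -
  from assms(1) have "G1 @ [a] @ G2 = L @ b # R"
    by simp
  then show thesis
  proof (cases rule: append3_eq_append_Cons_cases)
    case (left R1)
    show thesis
    proof (rule that)
      show "gvars L \<union> gvars R = gvars L \<union> gvars R1 \<union> gvars G2 \<union> avars a"
        using left by auto
      show "\<exists>L' R'. G1 @ A @ G2 = L' @ b # R'
          \<and> gvars L' \<union> gvars R' = gvars L \<union> gvars R1 \<union> gvars G2 \<union> gvars A" for A
        using left by (intro exI[of _ L] exI[of _ "R1 @ A @ G2"]) auto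
    qed
  next
    case (middle L1 R1)
    then show thesis
      using assms(2) by (cases L1) auto
  next
    case (right L2)
    show thesis
    proof (rule that)
      show "gvars L \<union> gvars R = gvars G1 \<union> gvars L2 \<union> gvars R \<union> avars a"
        using right by auto
      show "\<exists>L' R'. G1 @ A @ G2 = L' @ b # R'
          \<and> gvars L' \<union> gvars R' = gvars G1 \<union> gvars L2 \<union> gvars R \<union> gvars A" for A
        using right by (intro exI[of _ "G1 @ A @ L2"] exI[of _ R]) auto
    qed
  qed
qed

section \<open>Substitutions that keep local variables local\<close>

definition separated :: "subst \<Rightarrow> nat \<Rightarrow> bool" where
  "separated \<sigma> Y \<longleftrightarrow> (\<forall>W. W \<noteq> Y \<longrightarrow> tvars (\<sigma> W) \<inter> tvars (\<sigma> Y) = {})"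

lemma separated_disjoint:
  "separated \<sigma> Y \<Longrightarrow> Y \<notin> S \<Longrightarrow> tvars (\<sigma> Y) \<inter> (\<Union>x\<in>S. tvars (\<sigma> x)) = {}"
  by (auto simp: separated_def)

lemma separatedI_fixed:
  "\<sigma> Y = V Y \<Longrightarrow> (\<And>W. Y \<in> tvars (\<sigma> W) \<Longrightarrow> W = Y) \<Longrightarrow> separated \<sigma> Y"
  by (auto simp: separated_def)

lemma separated_renaming: "inj \<rho> \<Longrightarrow> separated (\<lambda>x. V (\<rho> x)) Y"
  by (auto simp: separated_def dest: injD)

lemma is_mgu_outside_vars:
  assumes "is_mgu \<theta> ts us" "Y \<notin> tsvars ts \<union> tsvars us"
  shows "\<theta> Y = V Y" and "Y \<in> tvars (\<theta> W) \<Longrightarrow> W = Y"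
proof -
  have relevant: "sdom \<theta> \<union> srange_vars \<theta> \<subseteq> tsvars ts \<union> tsvars us"
    using assms(1) by (simp add: is_mgu_def)
  then show "\<theta> Y = V Y"
    using assms(2) by (auto simp: sdom_def)
  show "W = Y" if "Y \<in> tvars (\<theta> W)"
    using relevant assms(2) that by (cases "\<theta> W = V W") (auto simp: sdom_def srange_vars_def)
qed

lemma is_mgu_separated_outside:
  "is_mgu \<theta> ts us \<Longrightarrow> Y \<notin> tsvars ts \<union> tsvars us \<Longrightarrow> separated \<theta> Y"
  using is_mgu_outside_vars by (blast intro: separatedI_fixed)

lemma safe_clause_csubstI:
  assumes "\<And>L t1 t2 R Y. B = L @ Neq t1 t2 # R \<Longrightarrow> Y \<in> tvars t1 \<union> tvars t2 \<Longrightarrow>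
      tvars (\<sigma> Y) \<subseteq> input_vars M h (map (tsubst \<sigma>) hs)
    \<or> separated \<sigma> Y \<and> Y \<notin> tsvars hs \<union> gvars L \<union> gvars R"
  shows "safe_clause M (csubst \<sigma> (Clause h hs B))"
  unfolding csubst_def clause.sel
proof (rule safe_clauseI)
  fix L s1 s2 R X
  assume split: "map (asubst \<sigma>) B = L @ Neq s1 s2 # R" and X: "X \<in> tvars s1 \<union> tvars s2"
  obtain L0 a R0 where "B = L0 @ a # R0"
    and LR: "L = map (asubst \<sigma>) L0" "R = map (asubst \<sigma>) R0" and a: "asubst \<sigma> a = Neq s1 s2"
    using split by (auto simp: map_eq_append_conv Cons_eq_map_conv)
  then obtain t1 t2 where B: "B = L0 @ Neq t1 t2 # R0" and s: "s1 = tsubst \<sigma> t1" "s2 = tsubst \<sigma> t2"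
    by (cases a) auto
  obtain Y where Y: "Y \<in> tvars t1 \<union> tvars t2" "X \<in> tvars (\<sigma> Y)"
    using X s by (auto simp: tvars_tsubst)
  show "X \<in> input_vars M h (map (tsubst \<sigma>) hs)
      \<or> X \<notin> tsvars (map (tsubst \<sigma>) hs) \<union> gvars L \<union> gvars R"
    using assms[OF B Y(1)] separated_disjoint[of \<sigma> Y] Y(2)
    unfolding LR tsvars_map_tsubst gvars_map_asubst by blast
qed

lemma safe_clause_variant:
  assumes "safe_clause M C" "variant C D"
  shows "safe_clause M D"
proof -
  obtain \<rho> where "bij \<rho>" and D: "D = csubst (\<lambda>x. V (\<rho> x)) C"
    using assms(2) by (auto simp: variant_def)
  then have "inj \<rho>"
    by (simp add: bij_is_inj)
  obtain h hs B where C: "C = Clause h hs B"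
    by (cases C)
  show ?thesis
    unfolding D C
  proof (rule safe_clause_csubstI)
    fix L t1 t2 R Y assume "B = L @ Neq t1 t2 # R" "Y \<in> tvars t1 \<union> tvars t2"
    then have "Y \<in> input_vars M h hs \<or> Y \<notin> tsvars hs \<union> gvars L \<union> gvars R"
      using assms(1) C safe_clauseD by blast
    then show "tvars (V (\<rho> Y)) \<subseteq> input_vars M h (map (tsubst (\<lambda>x. V (\<rho> x))) hs)
      \<or> separated (\<lambda>x. V (\<rho> x)) Y \<and> Y \<notin> tsvars hs \<union> gvars L \<union> gvars R"
      using separated_renaming[OF \<open>inj \<rho>\<close>] by (auto simp: input_vars_map_tsubst)
  qed
qed

section \<open>Safety of the clauses produced by the rules\<close>

lemma safe_clause_delete_atom:
  assumes "safe_clause M (Clause h hs (G1 @ a # G2))"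
  shows "safe_clause M (Clause h hs (G1 @ G2))"
proof (rule safe_clauseI)
  fix L t1 t2 R X assume "G1 @ G2 = L @ Neq t1 t2 # R" "X \<in> tvars t1 \<union> tvars t2"
  then show "X \<in> input_vars M h hs \<or> X \<notin> tsvars hs \<union> gvars L \<union> gvars R"
    using safe_clauseD[OF assms] by (cases rule: append_Cons_split_insert[where a = a]) blast
qed

lemma safe_clause_replace_neq:
  assumes safe: "safe_clause M (Clause h hs (G1 @ Neq s1 s2 # G2))"
    and vars: "tvars t1 \<union> tvars t2 \<subseteq> tvars s1 \<union> tvars s2"
  shows "safe_clause M (Clause h hs (G1 @ Neq t1 t2 # G2))"
proof (rule safe_clauseI)
  fix L u1 u2 R X assume split: "G1 @ Neq t1 t2 # G2 = L @ Neq u1 u2 # R"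
    and X: "X \<in> tvars u1 \<union> tvars u2"
  from split have "G1 @ [Neq t1 t2] @ G2 = L @ Neq u1 u2 # R"
    by simp
  then show "X \<in> input_vars M h hs \<or> X \<notin> tsvars hs \<union> gvars L \<union> gvars R"
  proof (cases rule: append3_eq_append_Cons_cases)
    case (left R1)
    then show ?thesis
      using safe_clauseD[OF safe, of L u1 u2 "R1 @ Neq s1 s2 # G2"] X vars by auto
  next
    case (middle L1 R1)
    then have "L1 = []" "R1 = []" "u1 = t1" "u2 = t2"
      by (auto simp: Cons_eq_append_conv)
    then show ?thesis
      using safe_clauseD[OF safe, of G1 s1 s2 G2 X] middle X vars by auto
  next
    case (right L2)
    then show ?thesis
      using safe_clauseD[OF safe, of "G1 @ Neq s1 s2 # L2" u1 u2 R] X vars by auto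
  qed
qed

lemma safe_clause_head_generalization:
  assumes safe: "safe_clause M (Clause p (map (tsubst (V(X := t))) hs) B)"
    and X: "X \<in> tsvars hs" "X \<notin> cvars (Clause p (map (tsubst (V(X := t))) hs) B)"
    and not_input: "X \<notin> input_vars M p hs"
  shows "safe_clause M (Clause p hs (Eq (V X) t # B))"
proof (rule safe_clauseI)
  fix L t1 t2 R Z
  assume split: "Eq (V X) t # B = L @ Neq t1 t2 # R" and Z: "Z \<in> tvars t1 \<union> tvars t2"
  then obtain L' where L: "L = Eq (V X) t # L'" and B: "B = L' @ Neq t1 t2 # R"
    by (cases L) auto
  have "Z \<noteq> X"
    using X(2) B Z by (auto simp: cvars_def)
  from safe_clauseD[OF safe B Z]
  show "Z \<in> input_vars M p hs \<or> Z \<notin> tsvars hs \<union> gvars L \<union> gvars R"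
  proof
    assume "Z \<in> input_vars M p (map (tsubst (V(X := t))) hs)"
    then show ?thesis
      using not_input \<open>Z \<noteq> X\<close> by (auto simp: input_vars_map_tsubst split: if_splits)
  next
    assume local: "Z \<notin> tsvars (map (tsubst (V(X := t))) hs) \<union> gvars L' \<union> gvars R"
    then have "Z \<notin> tsvars hs \<union> tvars t"
      using X(1) \<open>Z \<noteq> X\<close> unfolding tsvars_map_tsubst by (auto split: if_splits)
    then show ?thesis
      using local L \<open>Z \<noteq> X\<close> by auto
  qed
qed

lemma safe_clause_case_split_neq:
  assumes safe: "safe_clause M (Clause h hs B)"
    and X: "X \<in> input_vars M h hs"
    and t: "\<forall>Y\<in>tvars t. Y \<in> input_vars M h hs \<or> Y \<notin> cvars (Clause h hs B)"
  shows "safe_clause M (Clause h hs (Neq (V X) t # B))"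
proof (rule safe_clauseI)
  fix L t1 t2 R Z
  assume split: "Neq (V X) t # B = L @ Neq t1 t2 # R" and Z: "Z \<in> tvars t1 \<union> tvars t2"
  show "Z \<in> input_vars M h hs \<or> Z \<notin> tsvars hs \<union> gvars L \<union> gvars R"
  proof (cases L)
    case Nil
    then show ?thesis
      using split Z X t by (auto simp: cvars_def)
  next
    case (Cons a L')
    then have B: "B = L' @ Neq t1 t2 # R" and L: "L = Neq (V X) t # L'"
      using split by auto
    have "X \<in> tsvars hs"
      using X input_vars_subset_tsvars by blast
    then show ?thesis
      using safe_clauseD[OF safe B Z] t B L Z by (auto simp: cvars_def)
  qed
qed

lemma safe_clause_case_split_subst:
  assumes safe: "safe_clause M (Clause h hs B)"
    and X: "X \<in> input_vars M h hs"
    and t: "\<forall>Y\<in>tvars t. Y \<in> input_vars M h hs \<or> Y \<notin> cvars (Clause h hs B)"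
  shows "safe_clause M (csubst (V(X := t)) (Clause h hs B))"
proof (rule safe_clause_csubstI)
  fix L t1 t2 R Y assume B: "B = L @ Neq t1 t2 # R" and Y: "Y \<in> tvars t1 \<union> tvars t2"
  show "tvars ((V(X := t)) Y) \<subseteq> input_vars M h (map (tsubst (V(X := t))) hs)
    \<or> separated (V(X := t)) Y \<and> Y \<notin> tsvars hs \<union> gvars L \<union> gvars R"
  proof (cases "Y \<in> input_vars M h hs")
    case True
    then show ?thesis
      by (auto simp: input_vars_map_tsubst)
  next
    case False
    then have local: "Y \<notin> tsvars hs \<union> gvars L \<union> gvars R"
      using safe_clauseD[OF safe B Y] by blast
    moreover have "Y \<noteq> X"
      using local X input_vars_subset_tsvars by blast
    moreover have "Y \<notin> tvars t"
      using t False B Y by (auto simp: cvars_def)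
    ultimately have "separated (V(X := t)) Y"
      by (intro separatedI_fixed) (auto split: if_splits)
    then show ?thesis
      using local by blast
  qed
qed

lemma safe_clause_eq_elim:
  assumes safe: "safe_clause M (Clause h hs (G1 @ Eq t1 t2 # G2))"
    and mgu: "is_mgu \<theta> [t1] [t2]"
  shows "safe_clause M (csubst \<theta> (Clause h hs (G1 @ G2)))"
proof (rule safe_clause_csubstI)
  fix L u1 u2 R Y assume split: "G1 @ G2 = L @ Neq u1 u2 # R" and Y: "Y \<in> tvars u1 \<union> tvars u2"
  obtain L' R' where split': "G1 @ Eq t1 t2 # G2 = L' @ Neq u1 u2 # R'"
    and vars: "gvars L' \<union> gvars R' = gvars L \<union> gvars R \<union> avars (Eq t1 t2)"
    using append_Cons_split_insert[OF split] .
  show "tvars (\<theta> Y) \<subseteq> input_vars M h (map (tsubst \<theta>) hs)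
    \<or> separated \<theta> Y \<and> Y \<notin> tsvars hs \<union> gvars L \<union> gvars R"
    using safe_clauseD[OF safe split' Y]
  proof
    assume "Y \<in> input_vars M h hs"
    then show ?thesis
      by (auto simp: input_vars_map_tsubst)
  next
    assume local: "Y \<notin> tsvars hs \<union> gvars L' \<union> gvars R'"
    then have "Y \<notin> tsvars [t1] \<union> tsvars [t2]"
      using vars by (auto simp: tsvars_def)
    then have "separated \<theta> Y"
      using is_mgu_separated_outside[OF mgu] by blast
    then show ?thesis
      using local vars by blast
  qed
qed

lemma safe_unfolded_neq_var:
  assumes disjoint: "cvars D \<inter> cvars (Clause h hs (G1 @ At q us # G2)) = {}"
    and mgu: "is_mgu \<theta> (hargs D) us"
    and body: "body D = L @ Neq t1 t2 # R" and Y: "Y \<in> tvars t1 \<union> tvars t2"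
    and safe_unfolding: "\<forall>X \<in> tvars (\<theta> Y).
      X \<in> input_vars M h (map (tsubst \<theta>) hs) \<or> X \<in> local_vars_at D (length L)"
  shows "tvars (\<theta> Y) \<subseteq> input_vars M h (map (tsubst \<theta>) hs)
    \<or> separated \<theta> Y \<and> Y \<notin> tsvars hs \<union> gvars G1 \<union> gvars L \<union> gvars R \<union> gvars G2"
proof (cases "tvars (\<theta> Y) \<subseteq> input_vars M h (map (tsubst \<theta>) hs)")
  case False
  then obtain X where X: "X \<in> tvars (\<theta> Y)" "X \<in> local_vars_at D (length L)"
    using safe_unfolding by blast
  then have X_local: "X \<in> tvars t1 \<union> tvars t2" "X \<notin> tsvars (hargs D) \<union> gvars L \<union> gvars R"
    using local_vars_at_append_Cons[OF body] by auto
  then have "X \<in> cvars D"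
    using body by (auto simp: cvars_def)
  then have X_outside: "X \<notin> tsvars hs \<union> gvars G1 \<union> tsvars us \<union> gvars G2"
    using disjoint by (auto simp: cvars_def)
  \<comment> \<open>X is a variable of D untouched by the relevant mgu, so it can only come from Y = X\<close>
  then have "Y = X"
    using is_mgu_outside_vars(2)[OF mgu, of X Y] X(1) X_local by blast
  then show ?thesis
    using is_mgu_separated_outside[OF mgu, of X] X_local X_outside by auto
qed simp

lemma safe_clause_unfold:
  assumes safe: "safe_clause M (Clause h hs (G1 @ At q us # G2))"
    and disjoint: "cvars D \<inter> cvars (Clause h hs (G1 @ At q us # G2)) = {}"
    and mgu: "is_mgu \<theta> (hargs D) us"
    and safe_unfolding: "\<forall>i < length (body D). \<forall>t1 t2. body D ! i = Neq t1 t2 \<longrightarrow>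
        (\<forall>X \<in> tvars (tsubst \<theta> t1) \<union> tvars (tsubst \<theta> t2).
            X \<in> input_vars M h (map (tsubst \<theta>) hs) \<or> X \<in> local_vars_at D i)"
  shows "safe_clause M (csubst \<theta> (Clause h hs (G1 @ body D @ G2)))"
proof (rule safe_clause_csubstI)
  fix L t1 t2 R Y
  assume split: "G1 @ body D @ G2 = L @ Neq t1 t2 # R" and Y: "Y \<in> tvars t1 \<union> tvars t2"
  let ?goal = "tvars (\<theta> Y) \<subseteq> input_vars M h (map (tsubst \<theta>) hs)
    \<or> separated \<theta> Y \<and> Y \<notin> tsvars hs \<union> gvars L \<union> gvars R"
  have from_clause: ?goal
    if split': "G1 @ At q us # G2 = L' @ Neq t1 t2 # R'" and "tsvars us \<subseteq> gvars L' \<union> gvars R'"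
      and "gvars L \<union> gvars R \<subseteq> gvars L' \<union> gvars R' \<union> gvars (body D)" for L' R'
    using safe_clauseD[OF safe split' Y]
  proof
    assume "Y \<in> input_vars M h hs"
    then show ?goal
      by (auto simp: input_vars_map_tsubst)
  next
    assume local: "Y \<notin> tsvars hs \<union> gvars L' \<union> gvars R'"
    have "Y \<in> cvars (Clause h hs (G1 @ At q us # G2))"
      using Y split' by (auto simp: cvars_def)
    then have "Y \<notin> tsvars (hargs D) \<union> gvars (body D)"
      using disjoint by (auto simp: cvars_def)
    then show ?goal
      using local that is_mgu_separated_outside[OF mgu, of Y] by blast
  qed
  from split show ?goal
  proof (cases rule: append3_eq_append_Cons_cases)
    case (left R1)
    then show ?goal
      by (intro from_clause[of L "R1 @ At q us # G2"]) auto
  next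
    case (right L2)
    then show ?goal
      by (intro from_clause[of "G1 @ At q us # L2" R]) auto
  next
    case (middle L1 R1)
    have "length L1 < length (body D)" "body D ! length L1 = Neq t1 t2"
      using middle by auto
    then have "\<forall>X \<in> tvars (\<theta> Y).
        X \<in> input_vars M h (map (tsubst \<theta>) hs) \<or> X \<in> local_vars_at D (length L1)"
      using safe_unfolding Y by (fastforce simp: tvars_tsubst)
    then show ?goal
      using safe_unfolded_neq_var[OF disjoint mgu middle(1) Y] middle by auto
  qed
qed

lemma safe_clause_fold:
  assumes "Bs \<noteq> []"
    and head_vars: "\<forall>x\<in>set xs. \<exists>B\<in>set Bs. x \<in> gvars B"
    and safe: "\<forall>B\<in>set Bs. safe_clause M (Clause h hs (G1 @ map (asubst \<theta>) B @ G2))"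
  shows "safe_clause M (Clause h hs (G1 @ At newp (map \<theta> xs) # G2))"
proof (rule safe_clauseI)
  fix L t1 t2 R X assume split: "G1 @ At newp (map \<theta> xs) # G2 = L @ Neq t1 t2 # R"
    and X: "X \<in> tvars t1 \<union> tvars t2"
  obtain B0 where "B0 \<in> set Bs"
    using \<open>Bs \<noteq> []\<close> by (cases Bs) auto
  have "At newp (map \<theta> xs) \<noteq> Neq t1 t2"
    by simp
  then obtain K where K: "gvars L \<union> gvars R = K \<union> avars (At newp (map \<theta> xs))"
    and unfolded: "\<And>A. \<exists>L' R'. G1 @ A @ G2 = L' @ Neq t1 t2 # R'
      \<and> gvars L' \<union> gvars R' = K \<union> gvars A"
    using append_Cons_split_replace[OF split] by blast
  have local_in_unfolded:
    "X \<in> input_vars M h hs \<or> X \<notin> tsvars hs \<union> K \<union> gvars (map (asubst \<theta>) B)"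
    if "B \<in> set Bs" for B
    using unfolded[of "map (asubst \<theta>) B"] safe that safe_clauseD[OF _ _ X] by blast
  show "X \<in> input_vars M h hs \<or> X \<notin> tsvars hs \<union> gvars L \<union> gvars R"
  proof (cases "X \<in> input_vars M h hs")
    case False
    then have "X \<notin> tsvars (map \<theta> xs)"
      using local_in_unfolded head_vars by (fastforce simp: tsvars_def gvars_map_asubst)
    then show ?thesis
      using local_in_unfolded[OF \<open>B0 \<in> set Bs\<close>] False K by auto
  qed simp
qed

lemma safe_prog_Un [simp]: "safe_prog M (P \<union> Q) \<longleftrightarrow> safe_prog M P \<and> safe_prog M Q"
  by (auto simp: safe_prog_def)

lemma safe_prog_mono: "safe_prog M P \<Longrightarrow> Q \<subseteq> P \<Longrightarrow> safe_prog M Q"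
  by (auto simp: safe_prog_def)

lemma safe_prog_replace: "safe_prog M P \<Longrightarrow> \<forall>C\<in>N. safe_clause M C \<Longrightarrow> safe_prog M (P - A \<union> N)"
  by (auto simp: safe_prog_def)

lemma safe_prog_replace_clause:
  assumes "safe_prog M P" "C \<in> P" "\<And>E. safe_clause M C \<Longrightarrow> E \<in> N \<Longrightarrow> safe_clause M E"
  shows "safe_prog M (P - A \<union> N)"
  using assms by (auto simp: safe_prog_def)

definition head_vars_in_bodies :: "program \<Rightarrow> bool" where
  "head_vars_in_bodies D \<longleftrightarrow> (\<forall>E\<in>D. \<forall>x\<in>tsvars (hargs E).
     \<exists>E'\<in>D. hpred E' = hpred E \<and> hargs E' = hargs E \<and> x \<in> gvars (body E'))"

lemma tstep_head_vars_in_bodies: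
  assumes "tstep chk M P0 H Df P Df' P'" "head_vars_in_bodies Df"
  shows "head_vars_in_bodies Df'"
  using assms(1)
proof cases
  case (R1_definition Bs newp xs N)
  have "\<exists>E'\<in>N. hpred E' = hpred E \<and> hargs E' = hargs E \<and> x \<in> gvars (body E')"
    if new: "E \<in> N" and x: "x \<in> tsvars (hargs E)" for E x
  proof -
    obtain B where E: "E = Clause newp (map V xs) B"
      using new R1_definition by blast
    then obtain B' where "B' \<in> set Bs" "x \<in> gvars B'"
      using x R1_definition by auto
    then show ?thesis
      using E R1_definition by (intro bexI[of _ "Clause newp (map V xs) B'"]) auto
  qed
  then show ?thesis
    using assms(2) R1_definition unfolding head_vars_in_bodies_def by (metis Un_iff)
qed (use assms(2) in simp_all)

lemma tstep_Df_mono: "tstep chk M P0 H Df P Df' P' \<Longrightarrow> Df \<subseteq> Df'"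
  by (induction rule: tstep.induct) auto

lemma folding_head_vars_covered:
  assumes "head_vars_in_bodies Df" "Bs \<noteq> []"
    and newp_defs: "{E\<in>Df. hpred E = newp} = {Clause newp (map V xs) B | B. B \<in> set Bs}"
  shows "\<forall>x\<in>set xs. \<exists>B\<in>set Bs. x \<in> gvars B"
proof
  fix x assume "x \<in> set xs"
  obtain B0 where "B0 \<in> set Bs"
    using \<open>Bs \<noteq> []\<close> by (cases Bs) auto
  then have "Clause newp (map V xs) B0 \<in> Df"
    using newp_defs by blast
  then obtain E where "E \<in> Df" "hpred E = newp" "hargs E = map V xs" "x \<in> gvars (body E)"
    using assms(1) \<open>x \<in> set xs\<close> unfolding head_vars_in_bodies_def by fastforce
  then have "E \<in> {Clause newp (map V xs) B | B. B \<in> set Bs}"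
    using newp_defs by blast
  then show "\<exists>B\<in>set Bs. x \<in> gvars B"
    using \<open>x \<in> gvars (body E)\<close> by auto
qed

lemma safe_prog_unfold:
  assumes safe: "safe_prog M P" and "C \<in> P" and body: "body C = G1 @ [At q us] @ G2"
    and disjoint: "\<forall>D\<in>P. cvars (ren D) \<inter> cvars C = {}" and "U \<subseteq> P"
    and mgu: "\<forall>D\<in>U. is_mgu (\<theta> D) (hargs (ren D)) us"
    and safe_unfolding: "\<forall>D\<in>U. \<forall>i < length (body (ren D)). \<forall>t1 t2. body (ren D) ! i = Neq t1 t2 \<longrightarrow>
        (\<forall>X \<in> tvars (tsubst (\<theta> D) t1) \<union> tvars (tsubst (\<theta> D) t2).
            X \<in> input_vars M (hpred C) (map (tsubst (\<theta> D)) (hargs C))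
          \<or> X \<in> local_vars_at (ren D) i)"
  shows "safe_prog M ((P - {C}) \<union>
    {csubst (\<theta> D) (Clause (hpred C) (hargs C) (G1 @ body (ren D) @ G2)) | D. D \<in> U})"
proof -
  obtain h hs where C: "C = Clause h hs (G1 @ At q us # G2)"
    using body by (cases C) auto
  have "safe_clause M (csubst (\<theta> D) (Clause h hs (G1 @ body (ren D) @ G2)))" if "D \<in> U" for D
  proof (rule safe_clause_unfold)
    show "safe_clause M (Clause h hs (G1 @ At q us # G2))"
      using safe \<open>C \<in> P\<close> C unfolding safe_prog_def by blast
    show "cvars (ren D) \<inter> cvars (Clause h hs (G1 @ At q us # G2)) = {}"
      using disjoint that \<open>U \<subseteq> P\<close> C by blast
    show "is_mgu (\<theta> D) (hargs (ren D)) us"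
      using mgu that by blast
    show "\<forall>i < length (body (ren D)). \<forall>t1 t2. body (ren D) ! i = Neq t1 t2 \<longrightarrow>
        (\<forall>X \<in> tvars (tsubst (\<theta> D) t1) \<union> tvars (tsubst (\<theta> D) t2).
            X \<in> input_vars M h (map (tsubst (\<theta> D)) hs) \<or> X \<in> local_vars_at (ren D) i)"
      using safe_unfolding that unfolding C clause.sel by blast
  qed
  then show ?thesis
    unfolding C clause.sel by (intro safe_prog_replace[OF safe]) blast
qed

lemma safe_prog_fold:
  assumes safe: "safe_prog M P" and defs: "head_vars_in_bodies Df" and "Bs \<noteq> []"
    and newp_defs: "{E\<in>Df. hpred E = newp} = {Clause newp (map V xs) B | B. B \<in> set Bs}"
    and folded: "\<forall>B\<in>set Bs. cf B \<in> P \<and> variant (cf B) (Clause h hs (G1 @ map (asubst \<theta>) B @ G2))"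
  shows "safe_prog M ((P - cf ` set Bs) \<union> {Clause h hs (G1 @ [At newp (map \<theta> xs)] @ G2)})"
proof -
  have "safe_clause M (Clause h hs (G1 @ At newp (map \<theta> xs) # G2))"
  proof (rule safe_clause_fold)
    show "\<forall>x\<in>set xs. \<exists>B\<in>set Bs. x \<in> gvars B"
      using folding_head_vars_covered[OF defs \<open>Bs \<noteq> []\<close> newp_defs] .
    show "\<forall>B\<in>set Bs. safe_clause M (Clause h hs (G1 @ map (asubst \<theta>) B @ G2))"
      using folded safe safe_clause_variant unfolding safe_prog_def by blast
  qed (use \<open>Bs \<noteq> []\<close> in simp)
  then show ?thesis
    by (intro safe_prog_replace[OF safe]) simp
qed

lemma tstep_safe_prog:
  assumes step: "tstep True M P0 H Df P Df' P'" and safe: "safe_prog M P" "safe_prog M Df'"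
    and defs: "head_vars_in_bodies Df"
  shows "safe_prog M P'"
  using step
proof cases
  case (R1_definition Bs newp xs N)
  then show ?thesis
    using safe by simp
next
  case (R3_unfolding C G1 q us G2 ren U \<theta>)
  have "U \<subseteq> P"
    using R3_unfolding(7) by blast
  with R3_unfolding(3,4,5,8,9) show ?thesis
    unfolding R3_unfolding(2) by (intro safe_prog_unfold[OF safe(1)]) auto
next
  case (R4_folding Bs newp xs \<theta> h hs G1 G2 cf)
  show ?thesis
    unfolding R4_folding(2) by (rule safe_prog_fold[OF safe(1) defs R4_folding(3,4,6)])
next
  case (R6_head_generalization C p X t hs B)
  show ?thesis
    unfolding R6_head_generalization(2)
    by (rule safe_prog_replace_clause[OF safe(1) R6_head_generalization(4)])
      (use R6_head_generalization safe_clause_head_generalization in auto)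
next
  case (R7_case_split C X t)
  show ?thesis
    unfolding R7_case_split(2)
    by (rule safe_prog_replace_clause[OF safe(1) R7_case_split(3)], cases C)
      (use R7_case_split safe_clause_case_split_neq safe_clause_case_split_subst in auto)
next
  case (R8_equation_elimination_unif C h hs G1 t1 t2 G2 \<theta>)
  show ?thesis
    unfolding R8_equation_elimination_unif(2)
    by (rule safe_prog_replace_clause[OF safe(1) R8_equation_elimination_unif(4)])
      (use R8_equation_elimination_unif safe_clause_eq_elim in auto)
next
  case (R9_1 C h hs G1 t1 t2 G2)
  show ?thesis
    unfolding R9_1(2)
    by (rule safe_prog_replace_clause[OF safe(1) R9_1(4)])
      (use R9_1 safe_clause_delete_atom[of M h hs G1 "Neq t1 t2" G2] in auto)
next
  case (R9_2 C h hs G1 f ts us G2)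
  have args: "tvars (ts ! i) \<union> tvars (us ! i) \<subseteq> tvars (F f ts) \<union> tvars (F f us)"
    if "i < length ts" for i
    using that R9_2(5) nth_mem by fastforce
  show ?thesis
    unfolding R9_2(2)
    by (rule safe_prog_replace_clause[OF safe(1) R9_2(4)])
      (use args R9_2(3) safe_clause_replace_neq[of M h hs G1 "F f ts" "F f us"] in auto)
next
  case (R9_4 C h hs G1 t X G2)
  show ?thesis
    unfolding R9_4(2)
    by (rule safe_prog_replace_clause[OF safe(1) R9_4(4)])
      (use R9_4(3) safe_clause_replace_neq[of M h hs G1 t "V X" G2 "V X" t] in auto)
next
  case (R9_5 C h hs G1 X t1 G2 t2 G3 L1 L2 \<rho>)
  show ?thesis
    unfolding R9_5(2)
    by (rule safe_prog_replace_clause[OF safe(1) R9_5(4)])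
      (use R9_5(3) safe_clause_delete_atom[of M h hs "G1 @ [Neq (V X) t1] @ G2" "Neq (V X) t2" G3]
        in auto)
qed (use safe(1) in \<open>auto simp: safe_prog_def\<close>)

theorem proposition3:
  assumes "tseq True M P Df n"
    and "mode_for M (P 0 \<union> Df n)"
    and "safe_prog M (P 0 \<union> Df n)"
  shows "\<forall>k\<le>n. safe_prog M (P k)"
proof -
  have "Df 0 = {}" and step: "\<And>k. k < n \<Longrightarrow>
      tstep True M (P 0) (\<Union>j\<le>k. ppreds (P j)) (Df k) (P k) (Df (Suc k)) (P (Suc k))"
    using assms(1) unfolding tseq_def by auto
  have safe_defs: "safe_prog M (Df k)" if "k \<le> n" for k
  proof -
    from that have "Df k \<subseteq> Df n"
      by (induction rule: dec_induct) (use tstep_Df_mono[OF step] in auto)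
    then show ?thesis
      using assms(3) safe_prog_mono[of M "Df n"] by simp
  qed
  have "safe_prog M (P k) \<and> head_vars_in_bodies (Df k)" if "k \<le> n" for k
    using that
  proof (induction k)
    case 0
    then show ?case
      using assms(3) \<open>Df 0 = {}\<close> by (simp add: head_vars_in_bodies_def)
  next
    case (Suc k)
    then show ?case
      using tstep_safe_prog[OF step] tstep_head_vars_in_bodies[OF step] safe_defs by simp
  qed
  then show ?thesis
    by blast
qed

end
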